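(* Let $p$ be an odd prime such that $\mathbb{F}_p$ contains a primitive cube root of unity $\omega$, and for integers $0\le r_1,r_2,r_3\le p-1$ let $\mathcal{C}_{(r_1,r_2,r_3)}$ be the cyclic code of length $3p$ over $\mathbb{F}_p$ generated by $(x-1)^{r_1}(x-\omega)^{r_2}(x-\omega^2)^{r_3}$, and let $d_p$ denote minimum symbol-pair distance. Then: (1) $d_p(\mathcal{C}_{(0,r_2,0)})=4$ whenever $2\le r_2\le p-1$; and, for exponents satisfying $p-1\ge r_1\ge r_2\ge r_3\ge 0$: (2) $d_p(\mathcal{C}_{(2,1,0)})=5$; (3) $d_p(\mathcal{C}_{(r_1,r_2,0)})=6$ whenever $r_1+r_2\ge 4$ and $r_2\ge 1$; (4) $d_p(\mathcal{C}_{(2,r_2,r_3)})=6$ whenever $2\le r_2+r_3\le 4$.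
   Context: For $\mathbf{x}=(x_0,\dots,x_{n-1})\in\mathbb{F}_p^n$, the symbol-pair distance is $D_p(\mathbf{x},\mathbf{y})=|\{i:(x_i,x_{i+1})\neq(y_i,y_{i+1})\}|$ (indices modulo $n$); the minimum symbol-pair distance of a code is the minimum of $D_p$ over distinct codewords. The cyclic code generated by $g(x)\mid x^n-1$ is the ideal $\langle g(x)\rangle$ in $\mathbb{F}_p[x]/\langle x^n-1\rangle$. *)

theory Defs
  imports "HOL-Computational_Algebra.Polynomial"
begin

text \<open>A word of length n over a field is represented by a polynomial of degree < n;
  its i-th symbol is coeff c i (0 \<le> i < n).\<close>

definition xn_minus_1 :: "nat \<Rightarrow> 'a::comm_ring_1 poly" where
  "xn_minus_1 n = monom 1 n - 1"

text \<open>The cyclic code generated by g: the ideal generated by g in F[x]/(x^n - 1),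
  with residues represented by their canonical representatives of degree < n.\<close>
definition cyclic_code :: "nat \<Rightarrow> 'a::field poly \<Rightarrow> 'a poly set" where
  "cyclic_code n g = {(f * g) mod xn_minus_1 n | f. True}"

definition pair_dist :: "nat \<Rightarrow> 'a::zero poly \<Rightarrow> 'a poly \<Rightarrow> nat" where
  "pair_dist n x y = card {i. i < n \<and>
      (coeff x i, coeff x ((i + 1) mod n)) \<noteq> (coeff y i, coeff y ((i + 1) mod n))}"

definition min_pair_dist :: "nat \<Rightarrow> 'a::zero poly set \<Rightarrow> nat" where
  "min_pair_dist n C = Min {pair_dist n x y | x y. x \<in> C \<and> y \<in> C \<and> x \<noteq> y}"

definition gen3 :: "'a::comm_ring_1 \<Rightarrow> nat \<Rightarrow> nat \<Rightarrow> nat \<Rightarrow> 'a poly" where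
  "gen3 \<omega> r1 r2 r3 = [:-1, 1:] ^ r1 * [:-\<omega>, 1:] ^ r2 * [:-(\<omega>^2), 1:] ^ r3"

end

(*
  Every code considered is an ideal of F_p[x]/(x^(3p) - 1), so it is closed under subtraction
  and cyclic shifts, and its minimum pair distance is the least pair weight of a nonzero
  codeword. A codeword without full support can be rotated so that its constant term is
  nonzero and its coefficient at x^(n-1) vanishes; for such a word of degree D the positions
  n - 1, 0, D - 1, D already give pair weight 4, and each further nonzero inner coefficient
  adds more. So a word of pair weight at most 4 is a binomial a + c x^D, and one of pair
  weight at most 5 a trinomial a + b x^j + c x^D with j = 1 or j = D - 1.

  If (x - 1)^2 (x - \<omega>) divides a binomial, evaluating it and its derivative at 1 and \<omega>
  gives p | D and \<omega>^D = 1, hence 3p | D, impossible for 0 < D < 3p. The trinomials are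
  excluded in the same way by (x - 1)^3, by (x - 1)^2 (x - \<omega>)^2, or by x^3 - 1 (evaluated at
  all three cube roots of unity), one of which divides each generator in (3) and (4). The matching codewords are (x - \<omega>)^p = x^p - \<omega>^p, the generator
  (x - 1)^2 (x - \<omega>), (x^p - 1)(x^p - \<omega>^p) and (x^3 - 1)^2.
*)
theory Submission
  imports Defs "HOL-Number_Theory.Residues"
begin

(* Residues provides CHAR_dvd_CARD, but its HOL-Algebra ancestry shadows these polynomial names. *)
hide_const (open) UnivPoly.monom UnivPoly.coeff Module.module.smult

section \<open>Pair weight\<close>

definition pair_support :: "nat \<Rightarrow> 'a::zero poly \<Rightarrow> nat set" where
  "pair_support n c = {i. i < n \<and> (coeff c i \<noteq> 0 \<or> coeff c ((i + 1) mod n) \<noteq> 0)}"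

definition pair_weight :: "nat \<Rightarrow> 'a::zero poly \<Rightarrow> nat" where
  "pair_weight n c = card (pair_support n c)"

lemma pair_dist_eq_pair_weight: "pair_dist n x y = pair_weight n (x - y :: 'a::ab_group_add poly)"
  unfolding pair_dist_def pair_weight_def pair_support_def by (rule arg_cong[where f = card]) auto

lemma pair_support_subset: "pair_support n c \<subseteq> {..<n}"
  by (auto simp: pair_support_def)

lemma finite_pair_support [simp]: "finite (pair_support n c)"
  using pair_support_subset finite_subset by blast

lemma pair_weight_le: "pair_weight n c \<le> n"
  unfolding pair_weight_def using card_mono[OF _ pair_support_subset] by fastforce

lemma pair_weight_full_support:
  assumes "\<And>i. i < n \<Longrightarrow> coeff c i \<noteq> 0"
  shows "pair_weight n c = n"
proof -
  have "pair_support n c = {..<n}"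
    using assms by (auto simp: pair_support_def)
  then show ?thesis
    by (simp add: pair_weight_def)
qed

lemma pair_support_subset_shift:
  assumes "\<And>i. i < n \<Longrightarrow> coeff c i \<noteq> 0 \<Longrightarrow> i \<in> A"
  shows "pair_support n c \<subseteq> A \<union> (\<lambda>a. (a + n - 1) mod n) ` A"
proof
  fix i assume i: "i \<in> pair_support n c"
  show "i \<in> A \<union> (\<lambda>a. (a + n - 1) mod n) ` A"
  proof (cases "coeff c i = 0")
    case True
    then have "coeff c ((i + 1) mod n) \<noteq> 0" "i < n"
      using i by (auto simp: pair_support_def)
    then have "(i + 1) mod n \<in> A"
      using assms by simp
    moreover have "i = ((i + 1) mod n + n - 1) mod n"
      using \<open>i < n\<close> by (cases "i + 1 = n") auto
    ultimately show ?thesis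
      by blast
  qed (use i assms in \<open>auto simp: pair_support_def\<close>)
qed

lemma pair_weight_le_twice_card:
  assumes "\<And>i. i < n \<Longrightarrow> coeff c i \<noteq> 0 \<Longrightarrow> i \<in> A" and "finite A"
  shows "pair_weight n c \<le> 2 * card A"
proof -
  have "pair_weight n c \<le> card (A \<union> (\<lambda>a. (a + n - 1) mod n) ` A)"
    unfolding pair_weight_def using pair_support_subset_shift[OF assms(1)] assms(2)
    by (intro card_mono) auto
  also have "\<dots> \<le> card A + card A"
    using card_Un_le card_image_le[OF assms(2)] by (metis add_left_mono le_trans)
  finally show ?thesis
    by simp
qed

lemma pair_weight_le_degree:
  assumes "degree c + 1 < n"
  shows "pair_weight n c \<le> degree c + 2"
proof -
  have "pair_support n c \<subseteq> insert (n - 1) {..degree c}"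
  proof
    fix i assume i: "i \<in> pair_support n c"
    show "i \<in> insert (n - 1) {..degree c}"
    proof (cases "i + 1 < n")
      case True
      then show ?thesis
        using i by (auto simp: pair_support_def dest!: le_degree)
    qed (use i in \<open>auto simp: pair_support_def\<close>)
  qed
  then have "pair_weight n c \<le> card (insert (n - 1) {..degree c})"
    unfolding pair_weight_def by (intro card_mono) auto
  also have "\<dots> \<le> degree c + 2"
    using card_insert_le_m1[of "Suc (Suc (degree c))" "{..degree c}"] by simp
  finally show ?thesis .
qed

section \<open>Cyclic codes and cyclic shifts\<close>

lemma degree_xn_minus_1: "0 < n \<Longrightarrow> degree (xn_minus_1 n :: 'a::comm_ring_1 poly) = n"
  unfolding xn_minus_1_def by (subst diff_conv_add_uminus, subst degree_add_eq_left) (auto simp: degree_monom_eq)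

lemma cyclic_code_iff:
  fixes g :: "'a::field poly"
  assumes g: "g dvd xn_minus_1 n" and "0 < n"
  shows "c \<in> cyclic_code n g \<longleftrightarrow> g dvd c \<and> (\<forall>i\<ge>n. coeff c i = 0)"
proof -
  let ?m = "xn_minus_1 n :: 'a poly"
  have deg_m: "degree ?m = n"
    using degree_xn_minus_1[OF \<open>0 < n\<close>] .
  then have "?m \<noteq> 0"
    using \<open>0 < n\<close> by (metis degree_0 less_irrefl)
  have "c \<in> cyclic_code n g \<longleftrightarrow> (\<exists>f. c = (f * g) mod ?m)"
    by (simp add: cyclic_code_def)
  also have "\<dots> \<longleftrightarrow> g dvd c \<and> degree c < n \<or> g dvd c \<and> c = 0"
  proof
    assume "\<exists>f. c = (f * g) mod ?m"
    then obtain f where c: "c = (f * g) mod ?m" ..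
    then have "g dvd c"
      using g by (simp add: dvd_mod)
    then show "g dvd c \<and> degree c < n \<or> g dvd c \<and> c = 0"
      using degree_mod_less[OF \<open>?m \<noteq> 0\<close>, of "f * g"] c deg_m by auto
  next
    assume "g dvd c \<and> degree c < n \<or> g dvd c \<and> c = 0"
    then obtain f where "c = f * g" and "c mod ?m = c"
      using deg_m by (metis dvd_def mod_0 mod_poly_less mult.commute)
    then show "\<exists>f. c = (f * g) mod ?m"
      by metis
  qed
  also have "\<dots> \<longleftrightarrow> g dvd c \<and> (\<forall>i\<ge>n. coeff c i = 0)"
    using \<open>0 < n\<close> by (metis degree_0 le_degree leading_coeff_0_iff linorder_not_le order_le_less_trans)
  finally show ?thesis .
qed

lemma min_pair_dist_eqI:
  fixes C :: "'a::ab_group_add poly set"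
  assumes diff_closed: "\<And>x y. x \<in> C \<Longrightarrow> y \<in> C \<Longrightarrow> x - y \<in> C"
    and "0 \<in> C" and w: "w \<in> C" "w \<noteq> 0" "pair_weight n w = d"
    and lower: "\<And>c. c \<in> C \<Longrightarrow> c \<noteq> 0 \<Longrightarrow> d \<le> pair_weight n c"
  shows "min_pair_dist n C = d"
  unfolding min_pair_dist_def
proof (rule Min_eqI)
  show "finite {pair_dist n x y |x y. x \<in> C \<and> y \<in> C \<and> x \<noteq> y}"
    by (rule finite_subset[of _ "{..n}"]) (auto simp: pair_dist_eq_pair_weight pair_weight_le)
  show "d \<in> {pair_dist n x y |x y. x \<in> C \<and> y \<in> C \<and> x \<noteq> y}"
    using w \<open>0 \<in> C\<close> by (force simp: pair_dist_eq_pair_weight)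
next
  fix s assume "s \<in> {pair_dist n x y |x y. x \<in> C \<and> y \<in> C \<and> x \<noteq> y}"
  then show "d \<le> s"
    using lower diff_closed by (auto simp: pair_dist_eq_pair_weight)
qed

lemma cyclic_code_rotate:
  fixes g :: "'a::field poly"
  assumes g: "g dvd xn_minus_1 n" and "0 < n" and c: "c \<in> cyclic_code n g" and "t \<le> n"
  obtains R where "R \<in> cyclic_code n g" and "\<And>i. i < n \<Longrightarrow> coeff R i = coeff c ((i + t) mod n)"
proof -
  have "g dvd c" and c_high: "\<forall>i\<ge>n. coeff c i = 0"
    using c cyclic_code_iff[OF g \<open>0 < n\<close>] by auto
  define s where "s = n - t"
  define q where "q = monom 1 s * c"
  define R where "R = poly_cutoff n q + poly_shift n q"
  have "q = poly_cutoff n q + monom 1 n * poly_shift n q"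
    by (rule poly_eqI) (auto simp: coeff_poly_cutoff coeff_monom_mult coeff_poly_shift)
  then have "R = q - xn_minus_1 n * poly_shift n q"
    unfolding R_def xn_minus_1_def by (simp add: algebra_simps)
  then have "g dvd R"
    using g \<open>g dvd c\<close> by (simp add: q_def)
  have coeff_q: "coeff q k = (if k < s then 0 else coeff c (k - s))" for k
    unfolding q_def by (simp add: coeff_monom_mult)
  have "\<forall>i\<ge>n. coeff R i = 0"
    using c_high by (auto simp: R_def coeff_poly_cutoff coeff_poly_shift coeff_q s_def)
  with \<open>g dvd R\<close> have "R \<in> cyclic_code n g"
    using cyclic_code_iff[OF g \<open>0 < n\<close>] by blast
  moreover have "coeff R i = coeff c ((i + t) mod n)" if "i < n" for i
  proof (cases "i < s")
    case True
    then show ?thesis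
      using \<open>t \<le> n\<close> by (auto simp: R_def coeff_poly_cutoff coeff_poly_shift coeff_q s_def)
  next
    case False
    then have "(i + t) mod n = i - s"
      using \<open>i < n\<close> \<open>t \<le> n\<close> by (simp add: s_def mod_if)
    then show ?thesis
      using False \<open>i < n\<close> c_high by (auto simp: R_def coeff_poly_cutoff coeff_poly_shift coeff_q s_def)
  qed
  ultimately show ?thesis
    using that by blast
qed

lemma pair_weight_rotate_le:
  assumes R: "\<And>i. i < n \<Longrightarrow> coeff R i = coeff c ((i + t) mod n)"
  shows "pair_weight n R \<le> pair_weight n c"
proof -
  let ?f = "\<lambda>i. (i + t) mod n"
  have "inj_on ?f (pair_support n R)"
  proof (rule inj_onI)
    fix i j assume "i \<in> pair_support n R" "j \<in> pair_support n R" "?f i = ?f j"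
    then have "[i = j] (mod n)" "i < n" "j < n"
      using cong_add_rcancel_nat by (auto simp: pair_support_def cong_def)
    then show "i = j"
      by (simp add: cong_def)
  qed
  moreover have "?f ` pair_support n R \<subseteq> pair_support n c"
  proof
    fix x assume "x \<in> ?f ` pair_support n R"
    then obtain i where i: "i \<in> pair_support n R" "x = ?f i" by blast
    have "((i + 1) mod n + t) mod n = (x + 1) mod n"
      using i(2) by (simp add: mod_simps ac_simps)
    then show "x \<in> pair_support n c"
      using i R by (auto simp: pair_support_def)
  qed
  ultimately show ?thesis
    unfolding pair_weight_def by (intro card_inj_on_le) auto
qed

lemma exists_nonzero_coeff_after_zero:
  fixes c :: "'a::zero poly"
  assumes "c \<noteq> 0" and c_high: "\<forall>i\<ge>n. coeff c i = 0" and "u < n" "coeff c u = 0"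
  obtains t where "t < n" "coeff c t \<noteq> 0" "coeff c ((t + n - 1) mod n) = 0"
proof -
  obtain v where v: "coeff c v \<noteq> 0"
    using \<open>c \<noteq> 0\<close> by (metis leading_coeff_0_iff)
  have "v < n"
    using v c_high by (meson not_le)
  define K where "K = {k. k < n \<and> coeff c ((u + k) mod n) \<noteq> 0}"
  have "(u + (v + n - u) mod n) mod n = v"
    using \<open>u < n\<close> \<open>v < n\<close> by (simp add: mod_simps)
  then have "(v + n - u) mod n \<in> K"
    using v \<open>u < n\<close> by (auto simp: K_def)
  define k where "k = Min K"
  have "finite K" "K \<noteq> {}"
    using \<open>(v + n - u) mod n \<in> K\<close> by (auto simp: K_def)
  then have "k \<in> K" and k_min: "\<And>k'. k' \<in> K \<Longrightarrow> k \<le> k'"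
    by (simp_all add: k_def)
  have "k \<noteq> 0"
  proof
    assume "k = 0"
    then show False
      using \<open>k \<in> K\<close> \<open>u < n\<close> \<open>coeff c u = 0\<close> by (simp add: K_def)
  qed
  define t where "t = (u + k) mod n"
  have "t + n - 1 = (u + k) mod n + (n - 1)"
    using \<open>u < n\<close> by (simp add: t_def)
  then have "(t + n - 1) mod n = (u + k + (n - 1)) mod n"
    by (simp only: mod_add_left_eq)
  also have "u + k + (n - 1) = u + (k - 1) + n"
    using \<open>k \<noteq> 0\<close> \<open>u < n\<close> by simp
  finally have "(t + n - 1) mod n = (u + (k - 1)) mod n"
    by simp
  moreover have "k - 1 \<notin> K"
    using k_min[of "k - 1"] \<open>k \<noteq> 0\<close> by auto
  ultimately have "coeff c ((t + n - 1) mod n) = 0"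
    using \<open>k \<in> K\<close> by (auto simp: K_def)
  moreover have "t < n" "coeff c t \<noteq> 0"
    using \<open>k \<in> K\<close> \<open>u < n\<close> by (auto simp: K_def t_def)
  ultimately show ?thesis
    using that by blast
qed

lemma cyclic_code_normalizing_rotation:
  fixes g :: "'a::field poly"
  assumes g: "g dvd xn_minus_1 n" and "0 < n" and c: "c \<in> cyclic_code n g" "c \<noteq> 0"
    and "u < n" "coeff c u = 0"
  obtains R where "g dvd R" "coeff R 0 \<noteq> 0" "degree R + 1 < n" "pair_weight n R \<le> pair_weight n c"
proof -
  have "\<forall>i\<ge>n. coeff c i = 0"
    using c cyclic_code_iff[OF g \<open>0 < n\<close>] by blast
  then obtain t where t: "t < n" "coeff c t \<noteq> 0" "coeff c ((t + n - 1) mod n) = 0"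
    using exists_nonzero_coeff_after_zero c(2) \<open>u < n\<close> \<open>coeff c u = 0\<close> by blast
  obtain R where R: "R \<in> cyclic_code n g" and coeff_R: "\<And>i. i < n \<Longrightarrow> coeff R i = coeff c ((i + t) mod n)"
    using cyclic_code_rotate[OF g \<open>0 < n\<close> c(1)] t(1) by (metis less_imp_le)
  have "g dvd R" and R_high: "\<forall>i\<ge>n. coeff R i = 0"
    using R cyclic_code_iff[OF g \<open>0 < n\<close>] by auto
  have "coeff R 0 \<noteq> 0"
    using coeff_R[of 0] \<open>0 < n\<close> t by simp
  then have "lead_coeff R \<noteq> 0"
    by (metis coeff_0 leading_coeff_0_iff)
  moreover have "coeff R (n - 1) = 0"
    using coeff_R[of "n - 1"] \<open>0 < n\<close> t by (simp add: add.commute)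
  ultimately have "degree R < n" "degree R \<noteq> n - 1"
    using R_high by (metis not_le, metis)
  then have "degree R + 1 < n"
    by linarith
  moreover have "pair_weight n R \<le> pair_weight n c"
    using pair_weight_rotate_le coeff_R by blast
  ultimately show ?thesis
    using that \<open>g dvd R\<close> \<open>coeff R 0 \<noteq> 0\<close> by blast
qed

lemma min_pair_dist_cyclic_code_eqI:
  fixes g :: "'a::field poly"
  assumes g: "g dvd xn_minus_1 n" and "0 < n"
    and w: "w \<in> cyclic_code n g" "w \<noteq> 0" "pair_weight n w \<le> d" and "d \<le> n"
    and lower: "\<And>R. g dvd R \<Longrightarrow> coeff R 0 \<noteq> 0 \<Longrightarrow> degree R + 1 < n \<Longrightarrow> d \<le> pair_weight n R"
  shows "min_pair_dist n (cyclic_code n g) = d"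
proof -
  have code_lower: "d \<le> pair_weight n c" if c: "c \<in> cyclic_code n g" "c \<noteq> 0" for c
  proof (cases "\<forall>u<n. coeff c u \<noteq> 0")
    case True
    then show ?thesis
      using pair_weight_full_support \<open>d \<le> n\<close> by metis
  next
    case False
    then obtain u where "u < n" "coeff c u = 0"
      by blast
    then obtain R where "g dvd R" "coeff R 0 \<noteq> 0" "degree R + 1 < n" "pair_weight n R \<le> pair_weight n c"
      using cyclic_code_normalizing_rotation[OF g \<open>0 < n\<close> c] by blast
    then show ?thesis
      using lower by fastforce
  qed
  have diff_closed: "x - y \<in> cyclic_code n g" if "x \<in> cyclic_code n g" "y \<in> cyclic_code n g" for x y
    using that cyclic_code_iff[OF g \<open>0 < n\<close>] by simp
  have "0 \<in> cyclic_code n g"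
    using cyclic_code_iff[OF g \<open>0 < n\<close>] by simp
  moreover have "pair_weight n w = d"
    using code_lower[OF w(1,2)] w(3) by simp
  ultimately show ?thesis
    using min_pair_dist_eqI[OF diff_closed _ w(1,2) _ code_lower] by blast
qed

section \<open>Words of small pair weight\<close>

context
  fixes R :: "'a::comm_monoid_add poly" and n :: nat
  assumes constant_nonzero: "coeff R 0 \<noteq> 0" and degree_less: "degree R + 1 < n"
begin

lemma nonzero_coeff_in_pair_support:
  "i \<le> degree R \<Longrightarrow> coeff R i \<noteq> 0 \<Longrightarrow> i \<in> pair_support n R"
  using degree_less by (simp add: pair_support_def)

lemma pred_nonzero_coeff_in_pair_support:
  "0 < i \<Longrightarrow> i \<le> degree R \<Longrightarrow> coeff R i \<noteq> 0 \<Longrightarrow> i - 1 \<in> pair_support n R"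
  using degree_less by (simp add: pair_support_def)

lemma ends_in_pair_support: "{n - 1, 0, degree R - 1, degree R} \<subseteq> pair_support n R"
proof -
  have "lead_coeff R \<noteq> 0"
    using constant_nonzero by auto
  moreover have "n - 1 \<in> pair_support n R"
    using constant_nonzero degree_less by (simp add: pair_support_def)
  ultimately show ?thesis
    using constant_nonzero nonzero_coeff_in_pair_support
      pred_nonzero_coeff_in_pair_support[of "degree R"]
    by (cases "degree R") auto
qed

lemma card_add_4_le_pair_weight:
  assumes "2 \<le> degree R" and X: "X \<subseteq> pair_support n R" "X \<inter> {n - 1, 0, degree R - 1, degree R} = {}"
  shows "card X + 4 \<le> pair_weight n R"
proof -
  define E where "E = {n - 1, 0, degree R - 1, degree R}"
  have "finite X"
    using X(1) finite_pair_support finite_subset by blast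
  have "distinct [n - 1, 0, degree R - 1, degree R]"
    using assms(1) degree_less by auto
  then have "card E = 4"
    unfolding E_def using distinct_card by fastforce
  have "card X + card E = card (X \<union> E)"
    using X(2) \<open>finite X\<close> by (intro card_Un_disjoint[symmetric]) (auto simp: E_def)
  also have "\<dots> \<le> pair_weight n R"
    unfolding pair_weight_def E_def using X(1) ends_in_pair_support by (intro card_mono) auto
  finally show ?thesis
    using \<open>card E = 4\<close> by simp
qed

lemma four_le_pair_weight: "2 \<le> degree R \<Longrightarrow> 4 \<le> pair_weight n R"
  using card_add_4_le_pair_weight[of "{}"] by simp

lemma binomial_if_pair_weight_le_4:
  assumes "3 \<le> degree R" and "pair_weight n R \<le> 4"
  shows "R = monom (coeff R 0) 0 + monom (lead_coeff R) (degree R)"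
proof -
  have "coeff R s = 0" if "0 < s" "s < degree R" for s
  proof (rule ccontr)
    assume "coeff R s \<noteq> 0"
    define x where "x = (if s = degree R - 1 then s - 1 else s)"
    have "x \<in> pair_support n R"
      using \<open>coeff R s \<noteq> 0\<close> that nonzero_coeff_in_pair_support[of s]
        pred_nonzero_coeff_in_pair_support[of s]
      by (auto simp: x_def)
    moreover have "x \<notin> {n - 1, 0, degree R - 1, degree R}"
      using that assms(1) degree_less by (auto simp: x_def)
    ultimately have "card {x} + 4 \<le> pair_weight n R"
      using assms(1) by (intro card_add_4_le_pair_weight) auto
    then show False
      using assms(2) by simp
  qed
  moreover have "coeff R s = 0" if "degree R < s" for s
    using that coeff_eq_0 by blast
  ultimately have "coeff R s = 0" if "s \<noteq> 0" "s \<noteq> degree R" for s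
    using that by (metis linorder_neqE_nat neq0_conv)
  then show ?thesis
    using assms(1) by (intro poly_eqI) auto
qed

lemma inner_coeffs_eq_0_if_pair_weight_le_5:
  assumes "pair_weight n R \<le> 5" and "1 < s" "s < degree R - 1"
  shows "coeff R s = 0"
proof (rule ccontr)
  assume "coeff R s \<noteq> 0"
  then have "{s - 1, s} \<subseteq> pair_support n R"
    using assms(2,3) nonzero_coeff_in_pair_support pred_nonzero_coeff_in_pair_support by auto
  moreover have "{s - 1, s} \<inter> {n - 1, 0, degree R - 1, degree R} = {}"
    using assms(2,3) degree_less by auto
  ultimately have "card {s - 1, s} + 4 \<le> pair_weight n R"
    using assms(2,3) by (intro card_add_4_le_pair_weight) auto
  then show False
    using assms(1,2) by simp
qed

lemma coeff_1_or_pred_degree_eq_0: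
  assumes "4 \<le> degree R" and "pair_weight n R \<le> 5"
  shows "coeff R 1 = 0 \<or> coeff R (degree R - 1) = 0"
proof (rule ccontr)
  assume "\<not> (coeff R 1 = 0 \<or> coeff R (degree R - 1) = 0)"
  then have "{1, degree R - 1 - 1} \<subseteq> pair_support n R"
    using assms(1) nonzero_coeff_in_pair_support pred_nonzero_coeff_in_pair_support[of "degree R - 1"]
    by auto
  moreover have "{1, degree R - 1 - 1} \<inter> {n - 1, 0, degree R - 1, degree R} = {}"
    using assms(1) degree_less by auto
  ultimately have "card {1, degree R - 1 - 1} + 4 \<le> pair_weight n R"
    using assms(1) by (intro card_add_4_le_pair_weight) auto
  then show False
    using assms by simp
qed

lemma trinomial_if_pair_weight_le_5:
  assumes "4 \<le> degree R" and "pair_weight n R \<le> 5"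
  obtains j where "j = 1 \<or> j = degree R - 1"
    and "R = monom (coeff R 0) 0 + monom (coeff R j) j + monom (lead_coeff R) (degree R)"
proof -
  let ?D = "degree R"
  define j where "j = (if coeff R 1 = 0 then ?D - 1 else 1)"
  have "coeff R i = 0" if "i \<noteq> 0" "i \<noteq> j" "i \<noteq> ?D" for i
  proof (cases "?D < i")
    case True
    then show ?thesis
      by (simp add: coeff_eq_0)
  next
    case False
    then have "i = 1 \<or> i = ?D - 1 \<or> 1 < i \<and> i < ?D - 1"
      using that(1,3) by presburger
    then show ?thesis
      using that(2) coeff_1_or_pred_degree_eq_0[OF assms] inner_coeffs_eq_0_if_pair_weight_le_5[OF assms(2)]
      by (cases "coeff R 1 = 0") (auto simp: j_def)
  qed
  moreover have "j = 1 \<or> j = ?D - 1"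
    by (simp add: j_def)
  moreover from this have "j \<noteq> 0" "j \<noteq> ?D"
    using assms(1) by auto
  ultimately have "R = monom (coeff R 0) 0 + monom (coeff R j) j + monom (lead_coeff R) ?D"
    using assms(1) by (intro poly_eqI) simp
  then show ?thesis
    using that \<open>j = 1 \<or> j = ?D - 1\<close> by blast
qed

end

section \<open>Multiple roots of trinomials\<close>

lemma linear_power_Suc_dvd_pderiv:
  fixes f :: "'a::field poly"
  assumes "[:-a, 1:] ^ Suc m dvd f"
  shows "[:-a, 1:] ^ m dvd pderiv f"
proof -
  obtain q where f: "f = [:-a, 1:] ^ Suc m * q"
    using assms by blast
  have "pderiv f = [:-a, 1:] ^ m * (smult (of_nat (Suc m)) q + [:-a, 1:] * pderiv q)"
    unfolding f pderiv_mult pderiv_power_Suc by (simp add: algebra_simps pderiv_pCons)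
  then show ?thesis
    by simp
qed

lemma poly_higher_pderiv_eq_0:
  fixes f :: "'a::field poly"
  assumes "[:-a, 1:] ^ k dvd f" and "i < k"
  shows "poly ((pderiv ^^ i) f) a = 0"
  using assms
proof (induction i arbitrary: f k)
  case 0
  then have "[:-a, 1:] dvd f"
    using dvd_power_le[of "[:-a, 1:]" "[:-a, 1:]" 1 k] dvd_trans by fastforce
  then show ?case
    by (simp add: poly_eq_0_iff_dvd)
next
  case (Suc i)
  then obtain m where "k = Suc m" "i < m"
    by (metis Suc_lessE)
  then have "[:-a, 1:] ^ m dvd pderiv f"
    using Suc.prems(1) linear_power_Suc_dvd_pderiv by blast
  then have "poly ((pderiv ^^ i) (pderiv f)) a = 0"
    using Suc.IH \<open>i < m\<close> by blast
  then show ?case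
    by (simp add: funpow_Suc_right del: funpow.simps)
qed

lemma poly_trinomial:
  "poly (monom a 0 + monom b j + monom c D) x = a + b * x ^ j + c * x ^ D"
  "poly (pderiv (monom a 0 + monom b j + monom c D)) x =
     of_nat j * b * x ^ (j - 1) + of_nat D * c * x ^ (D - 1)"
  "poly (pderiv (pderiv (monom a 0 + monom b j + monom c D))) x =
     of_nat (j - 1) * of_nat j * b * x ^ (j - 1 - 1) + of_nat (D - 1) * of_nat D * c * x ^ (D - 1 - 1)"
  by (simp_all add: poly_monom pderiv_add pderiv_monom mult.assoc)

lemma linear_cube_not_dvd_trinomial:
  fixes a b c :: "'a::field"
  assumes "a \<noteq> 0" "b \<noteq> 0" "c \<noteq> 0" and j: "j = 1 \<or> j = D - 1" and "2 \<le> D"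
  shows "\<not> [:-1, 1:] ^ 3 dvd monom a 0 + monom b j + monom c D"
proof
  let ?T = "monom a 0 + monom b j + monom c D"
  assume dvd: "[:-1, 1:] ^ 3 dvd ?T"
  have "poly ((pderiv ^^ i) ?T) 1 = 0" if "i < 3" for i
    using poly_higher_pderiv_eq_0[OF dvd that] .
  from this[of 0] this[of 1] this[of 2]
  have E0: "a + b + c = 0" and E1: "of_nat j * b + of_nat D * c = 0"
    and E2: "of_nat (j - 1) * of_nat j * b + of_nat (D - 1) * of_nat D * c = 0"
    by (simp_all add: poly_trinomial poly_monom numeral_2_eq_2)
  define d where "d = (of_nat D :: 'a)"
  have d_minus_1: "of_nat (D - 1) = d - 1"
    using \<open>2 \<le> D\<close> by (simp add: d_def)
  have d_minus_2: "of_nat (D - 1 - 1) = d - 2"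
    using \<open>2 \<le> D\<close> by (simp add: d_def)
  from j show False
  proof
    assume "j = 1"
    then have "b + d * c = 0" and "(d - 1) * d * c = 0"
      using E1 E2 unfolding d_minus_1 d_def[symmetric] by simp_all
    then have "b = 0 \<or> b + c = 0"
      using \<open>c \<noteq> 0\<close> by (auto simp: algebra_simps)
    then show False
      using E0 \<open>a \<noteq> 0\<close> \<open>b \<noteq> 0\<close> by (auto simp: add.assoc)
  next
    assume "j = D - 1"
    then have E1': "(d - 1) * b + d * c = 0" and E2': "(d - 2) * (d - 1) * b + (d - 1) * d * c = 0"
      using E1 E2 unfolding \<open>j = D - 1\<close> d_minus_1 d_minus_2 d_def[symmetric] by simp_all
    have "d * c = ((d - 2) * (d - 1) * b + (d - 1) * d * c) - (d - 2) * ((d - 1) * b + d * c)"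
      by (simp add: algebra_simps)
    then have "d = 0"
      using E1' E2' \<open>c \<noteq> 0\<close> by simp
    then show False
      using E1' \<open>b \<noteq> 0\<close> by simp
  qed
qed

lemma double_roots_not_dvd_trinomial:
  fixes a b c \<alpha> :: "'a::field"
  assumes "\<alpha> \<noteq> 0" "\<alpha> \<noteq> 1" "a \<noteq> 0" "b \<noteq> 0" "c \<noteq> 0" and j: "j = 1 \<or> j = D - 1" and "2 \<le> D"
  shows "\<not> ([:-1, 1:] ^ 2 dvd monom a 0 + monom b j + monom c D \<and>
            [:-\<alpha>, 1:] ^ 2 dvd monom a 0 + monom b j + monom c D)"
proof
  let ?T = "monom a 0 + monom b j + monom c D"
  assume "[:-1, 1:] ^ 2 dvd ?T \<and> [:-\<alpha>, 1:] ^ 2 dvd ?T"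
  then have "poly ((pderiv ^^ i) ?T) x = 0" if "i < 2" "x \<in> {1, \<alpha>}" for i x
    using poly_higher_pderiv_eq_0 that by blast
  from this[of 0 1] this[of 1 1] this[of 0 \<alpha>] this[of 1 \<alpha>]
  have E0: "a + b + c = 0" and E1: "of_nat j * b + of_nat D * c = 0"
    and E\<alpha>: "a + b * \<alpha> ^ j + c * \<alpha> ^ D = 0"
    and E\<alpha>1: "of_nat j * b * \<alpha> ^ (j - 1) + of_nat D * c * \<alpha> ^ (D - 1) = 0"
    by (simp_all add: poly_trinomial poly_monom)
  define d where "d = (of_nat D :: 'a)"
  have d_minus_1: "of_nat (D - 1) = d - 1"
    using \<open>2 \<le> D\<close> by (simp add: d_def)
  obtain m where "D = Suc (Suc m)"
    using \<open>2 \<le> D\<close> by (metis add_2_eq_Suc le_Suc_ex)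
  then have power_D_minus_1: "\<alpha> ^ (D - 1) = \<alpha> ^ (D - 1 - 1) * \<alpha>" and power_D: "\<alpha> ^ D = \<alpha> ^ (D - 1) * \<alpha>"
    by (simp_all add: power_Suc2 del: power_Suc)
  from j show False
  proof
    assume "j = 1"
    then have "b + d * c = 0" and "b + d * c * \<alpha> ^ (D - 1) = 0"
      using E1 E\<alpha>1 unfolding d_def[symmetric] by simp_all
    moreover have "d * c * (\<alpha> ^ (D - 1) - 1) = (b + d * c * \<alpha> ^ (D - 1)) - (b + d * c)"
      by (simp add: algebra_simps)
    ultimately have "d * c * (\<alpha> ^ (D - 1) - 1) = 0" and "d * c \<noteq> 0"
      using \<open>b \<noteq> 0\<close> by (simp, metis add.right_neutral)
    then have "\<alpha> ^ D = \<alpha>"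
      using power_D by simp
    then have "a + b * \<alpha> + c * \<alpha> = 0"
      using E\<alpha> \<open>j = 1\<close> by simp
    moreover have "(b + c) * (\<alpha> - 1) = (a + b * \<alpha> + c * \<alpha>) - (a + b + c)"
      by (simp add: algebra_simps)
    ultimately have "(b + c) * (\<alpha> - 1) = 0"
      using E0 by simp
    then show False
      using E0 \<open>a \<noteq> 0\<close> \<open>\<alpha> \<noteq> 1\<close> by (simp add: add.assoc)
  next
    assume "j = D - 1"
    have E1': "(d - 1) * b + d * c = 0"
      using E1 unfolding \<open>j = D - 1\<close> d_minus_1 d_def[symmetric] .
    have "\<alpha> ^ (D - 1 - 1) * ((d - 1) * b + d * c * \<alpha>) = (d - 1) * b * \<alpha> ^ (D - 1 - 1) + d * c * \<alpha> ^ (D - 1)"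
      unfolding power_D_minus_1 by (simp add: algebra_simps)
    also have "\<dots> = 0"
      using E\<alpha>1 unfolding \<open>j = D - 1\<close> d_minus_1 d_def[symmetric] .
    finally have "(d - 1) * b + d * c * \<alpha> = 0"
      using \<open>\<alpha> \<noteq> 0\<close> by simp
    moreover have "d * c * (\<alpha> - 1) = ((d - 1) * b + d * c * \<alpha>) - ((d - 1) * b + d * c)"
      by (simp add: algebra_simps)
    ultimately have "d = 0"
      using E1' \<open>c \<noteq> 0\<close> \<open>\<alpha> \<noteq> 1\<close> by simp
    then show False
      using E1' \<open>b \<noteq> 0\<close> by simp
  qed
qed

lemma coeff_monom_minus_const_mult:
  fixes \<alpha> \<beta> :: "'a::comm_ring_1"
  assumes "i \<notin> {0, k, 2 * k}"
  shows "coeff ((monom 1 k - [:\<alpha>:]) * (monom 1 k - [:\<beta>:])) i = 0"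
  using assms by (simp add: algebra_simps mult_monom flip: monom_0)

lemma gen3_dvd_gen3:
  "s1 \<le> r1 \<Longrightarrow> s2 \<le> r2 \<Longrightarrow> s3 \<le> r3 \<Longrightarrow> gen3 \<omega> s1 s2 s3 dvd gen3 \<omega> r1 r2 r3"
  unfolding gen3_def by (intro mult_dvd_mono le_imp_power_dvd)

lemma degree_gen3: "degree (gen3 (\<omega> :: 'a::idom) r1 r2 r3) = r1 + r2 + r3"
  unfolding gen3_def by (simp add: degree_mult_eq degree_linear_power)

lemma degree_ge_if_gen3_dvd:
  "gen3 (\<omega> :: 'a::idom) r1 r2 r3 dvd f \<Longrightarrow> f \<noteq> 0 \<Longrightarrow> r1 + r2 + r3 \<le> degree f"
  using dvd_imp_degree_le degree_gen3 by metis

lemma factors_dvd_if_gen3_dvd: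
  assumes "gen3 \<omega> r1 r2 r3 dvd f"
  shows "[:-1, 1:] ^ r1 dvd f" "[:-\<omega>, 1:] ^ r2 dvd f"
  using assms unfolding gen3_def by (meson dvd_mult_left dvd_mult_right)+

lemma gen3_nonzero: "gen3 (\<omega> :: 'a::idom) r1 r2 r3 \<noteq> 0"
  unfolding gen3_def by simp

section \<open>Primitive cube roots of unity\<close>

locale primitive_cube_root =
  fixes \<omega> :: "'a::field"
  assumes cube: "\<omega> ^ 3 = 1" and nontrivial: "\<omega> \<noteq> 1"
begin

lemma nonzero: "\<omega> \<noteq> 0"
  using cube by auto

lemma sum_eq_0: "1 + \<omega> + \<omega> ^ 2 = 0"
proof -
  have "(\<omega> - 1) * (1 + \<omega> + \<omega> ^ 2) = \<omega> ^ 3 - 1"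
    by (simp add: algebra_simps power2_eq_square power3_eq_cube)
  then show ?thesis
    using cube nontrivial by simp
qed

lemma power_mod_3: "\<omega> ^ m = \<omega> ^ (m mod 3)"
proof -
  have "\<omega> ^ m = (\<omega> ^ 3) ^ (m div 3) * \<omega> ^ (m mod 3)"
    by (simp flip: power_mult power_add)
  then show ?thesis
    using cube by simp
qed

lemma power_eq_1_iff: "\<omega> ^ m = 1 \<longleftrightarrow> 3 dvd m"
proof -
  have "\<omega> ^ 2 \<noteq> 1"
  proof
    assume "\<omega> ^ 2 = 1"
    then have "\<omega> ^ 3 = \<omega>"
      by (simp add: power3_eq_cube power2_eq_square mult.assoc[symmetric])
    then show False
      using cube nontrivial by simp
  qed
  moreover have "m mod 3 = 0 \<or> m mod 3 = 1 \<or> m mod 3 = 2"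
    by presburger
  ultimately show ?thesis
    using power_mod_3[of m] nontrivial by (auto simp: dvd_eq_mod_eq_0)
qed

lemma three_neq_0: "(3 :: 'a) \<noteq> 0"
proof
  have "(\<omega> - 1) ^ 3 = \<omega> ^ 3 - 1 - 3 * (\<omega> ^ 2 - \<omega>)"
    by (simp add: algebra_simps power2_eq_square power3_eq_cube)
  moreover assume "(3 :: 'a) = 0"
  ultimately show False
    using cube nontrivial by simp
qed

lemma gen3_1_1_1: "gen3 \<omega> 1 1 1 = monom 1 3 - 1"
proof -
  have "gen3 \<omega> 1 1 1 = [:- (\<omega> ^ 3), \<omega> * (1 + \<omega> + \<omega> ^ 2), - (1 + \<omega> + \<omega> ^ 2), 1:]"
    by (simp add: gen3_def algebra_simps power2_eq_square power3_eq_cube)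
  also have "\<dots> = monom 1 3 - 1"
    using cube sum_eq_0 by (intro poly_eqI) (simp add: coeff_pCons numeral_3_eq_3 split: nat.split)
  finally show ?thesis .
qed

lemma square_power_eq: "(\<omega> ^ 2) ^ m = (\<omega> ^ m) ^ 2"
  by (simp flip: power_mult add: mult.commute)

lemma sum_powers: "1 + \<omega> ^ m + (\<omega> ^ 2) ^ m = (if 3 dvd m then 3 else 0)"
proof (cases "3 dvd m")
  case True
  then have "\<omega> ^ m = 1"
    using power_eq_1_iff by blast
  then show ?thesis
    using True square_power_eq by simp
next
  case False
  have "(\<omega> ^ m) ^ 3 = (\<omega> ^ 3) ^ m"
    by (metis power_mult mult.commute)
  then have "(\<omega> ^ m) ^ 3 = 1"
    using cube by simp
  then interpret power: primitive_cube_root "\<omega> ^ m"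
    using False power_eq_1_iff by unfold_locales simp_all
  show ?thesis
    using power.sum_eq_0 False square_power_eq by simp
qed

lemma x3_minus_1_not_dvd_trinomial:
  fixes a b c :: 'a
  assumes "a \<noteq> 0" "b \<noteq> 0" "c \<noteq> 0" and "\<not> (3 dvd j \<and> 3 dvd D)"
  shows "\<not> monom 1 3 - 1 dvd monom a 0 + monom b j + monom c D"
proof
  assume dvd: "monom 1 3 - 1 dvd monom a 0 + monom b j + monom c D"
  have root: "a + b * z ^ j + c * z ^ D = 0" if "z ^ 3 = 1" for z
  proof -
    have "poly (monom 1 3 - 1) z = 0"
      using that by (simp add: poly_monom)
    then have "poly (monom a 0 + monom b j + monom c D) z = 0"
      using dvd by (metis dvd_trans poly_eq_0_iff_dvd)
    then show ?thesis
      by (simp add: poly_monom)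
  qed
  have "(\<omega> ^ 2) ^ 3 = 1"
    using cube by (metis power_mult mult.commute power_one)
  then have E\<omega>: "a + b * \<omega> ^ j + c * \<omega> ^ D = 0" and E\<omega>2: "a + b * (\<omega> ^ 2) ^ j + c * (\<omega> ^ 2) ^ D = 0"
    using root cube by blast+
  have E1: "a + b + c = 0"
    using root[of 1] by simp
  have "3 * (a + (if 3 dvd j then b else 0) + (if 3 dvd D then c else 0))
      = 3 * a + b * (1 + \<omega> ^ j + (\<omega> ^ 2) ^ j) + c * (1 + \<omega> ^ D + (\<omega> ^ 2) ^ D)"
    unfolding sum_powers by (simp add: algebra_simps)
  also have "\<dots> = (a + b + c) + (a + b * \<omega> ^ j + c * \<omega> ^ D) + (a + b * (\<omega> ^ 2) ^ j + c * (\<omega> ^ 2) ^ D)"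
    by (simp add: algebra_simps)
  also have "\<dots> = 0"
    unfolding E1 E\<omega> E\<omega>2 by simp
  finally have "a + (if 3 dvd j then b else 0) + (if 3 dvd D then c else 0) = 0"
    using three_neq_0 mult_eq_0_iff by blast
  then show False
    using E1 assms by (cases "3 dvd j"; cases "3 dvd D") (simp_all add: eq_neg_iff_add_eq_0[symmetric])
qed

end

section \<open>Cyclic codes of length 3p\<close>

locale cyclic_code_3p = primitive_cube_root \<omega> for \<omega> :: "'a::{field,finite}" +
  fixes p :: nat
  assumes prime_p: "prime p" and odd_p: "odd p" and card_UNIV: "card (UNIV :: 'a set) = p"
begin

lemma CHAR_eq: "CHAR('a) = p"
proof -
  have "CHAR('a) dvd p"
    using CHAR_dvd_CARD[where 'a = 'a] card_UNIV by simp
  then show ?thesis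
    using prime_p CHAR_not_1[where 'a = 'a] by (auto simp: prime_nat_iff)
qed

lemma of_nat_eq_0_iff: "(of_nat m :: 'a) = 0 \<longleftrightarrow> p dvd m"
  using of_nat_eq_0_iff_char_dvd[where 'a = 'a] CHAR_eq by simp

lemma p_neq_3: "p \<noteq> 3"
  using three_neq_0 of_nat_eq_0_iff[of 3] by auto

lemma five_le_p: "5 \<le> p"
  using prime_ge_2_nat[OF prime_p] odd_p p_neq_3 by presburger

lemma three_p_dvd:
  assumes "of_nat D = (0 :: 'a)" and "\<omega> ^ D = 1"
  shows "3 * p dvd D"
proof (rule divides_mult)
  show "3 dvd D" "p dvd D"
    using assms power_eq_1_iff of_nat_eq_0_iff by auto
  show "coprime 3 p"
    using prime_p p_neq_3 by (intro primes_coprime) auto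
qed

lemma linear_power_p: "[:-a, 1:] ^ p = (monom 1 p - [:a ^ p:] :: 'a poly)"
proof -
  have "[:-a, 1:] = monom 1 1 + [:-a:]"
    by (simp add: monom_altdef)
  also have "\<dots> ^ p = monom 1 1 ^ p + [:-a:] ^ p"
    using CHAR_eq prime_p by (intro freshmans_dream) auto
  also have "\<dots> = monom 1 p - [:a ^ p:]"
    using odd_p by (simp add: monom_power poly_const_pow)
  finally show ?thesis .
qed

lemma gen3_p_p_p: "gen3 \<omega> p p p = xn_minus_1 (3 * p)"
proof -
  have "gen3 \<omega> p p p = gen3 \<omega> 1 1 1 ^ p"
    unfolding gen3_def by (simp only: power_one_right power_mult_distrib)
  also have "\<dots> = (monom 1 3 + (- 1)) ^ p"
    unfolding gen3_1_1_1 by simp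
  also have "\<dots> = monom 1 3 ^ p + (- 1) ^ p"
    using CHAR_eq prime_p by (intro freshmans_dream) auto
  also have "\<dots> = xn_minus_1 (3 * p)"
    using odd_p by (simp add: monom_power xn_minus_1_def mult.commute)
  finally show ?thesis .
qed

lemma gen3_dvd_xn_minus_1:
  "r1 \<le> p \<Longrightarrow> r2 \<le> p \<Longrightarrow> r3 \<le> p \<Longrightarrow> gen3 \<omega> r1 r2 r3 dvd xn_minus_1 (3 * p)"
  using gen3_dvd_gen3[of r1 p r2 p r3 p \<omega>] by (simp add: gen3_p_p_p)

lemma binomial_not_dvd:
  fixes a c :: 'a
  assumes "c \<noteq> 0" and "0 < D" "D < 3 * p"
  shows "\<not> gen3 \<omega> 2 1 0 dvd monom a 0 + monom c D"
proof
  let ?T = "monom a 0 + monom c D"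
  assume dvd: "gen3 \<omega> 2 1 0 dvd ?T"
  have "[:-1, 1:] ^ 2 dvd ?T" "[:-\<omega>, 1:] ^ 1 dvd ?T"
    using factors_dvd_if_gen3_dvd[OF dvd] by simp_all
  from poly_higher_pderiv_eq_0[OF this(1), of 0] poly_higher_pderiv_eq_0[OF this(1), of 1]
    poly_higher_pderiv_eq_0[OF this(2), of 0]
  have "a + c = 0" "of_nat D * c = 0" "a + c * \<omega> ^ D = 0"
    by (simp_all add: poly_monom pderiv_add pderiv_monom)
  moreover have "c * (\<omega> ^ D - 1) = (a + c * \<omega> ^ D) - (a + c)"
    by (simp add: algebra_simps)
  ultimately have "of_nat D = (0 :: 'a)" "\<omega> ^ D = 1"
    using \<open>c \<noteq> 0\<close> by simp_all
  then have "3 * p dvd D"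
    by (rule three_p_dvd)
  then show False
    using assms(2,3) by (auto dest: dvd_imp_le)
qed

lemma five_le_pair_weight:
  assumes dvd: "gen3 \<omega> 2 1 0 dvd R" and "coeff R 0 \<noteq> 0" "degree R + 1 < 3 * p"
  shows "5 \<le> pair_weight (3 * p) R"
proof (rule ccontr)
  assume "\<not> 5 \<le> pair_weight (3 * p) R"
  moreover have "3 \<le> degree R"
    using degree_ge_if_gen3_dvd[OF dvd] assms(2) by fastforce
  ultimately have R: "R = monom (coeff R 0) 0 + monom (lead_coeff R) (degree R)"
    using assms(2,3) by (intro binomial_if_pair_weight_le_4) auto
  have "lead_coeff R \<noteq> 0"
    using assms(2) by auto
  then have "\<not> gen3 \<omega> 2 1 0 dvd monom (coeff R 0) 0 + monom (lead_coeff R) (degree R)"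
    using assms(3) \<open>3 \<le> degree R\<close> by (intro binomial_not_dvd) auto
  with dvd R show False
    by metis
qed

lemma trinomial_not_dvd:
  fixes a b c :: 'a
  assumes h: "h \<in> {gen3 \<omega> 3 1 0, gen3 \<omega> 2 2 0, gen3 \<omega> 2 1 1}"
    and "a \<noteq> 0" "c \<noteq> 0" and j: "j = 1 \<or> j = D - 1" and "4 \<le> D" "D < 3 * p"
  shows "\<not> h dvd monom a 0 + monom b j + monom c D"
proof
  let ?T = "monom a 0 + monom b j + monom c D"
  assume dvd: "h dvd ?T"
  have "gen3 \<omega> 2 1 0 dvd h"
    using h by (elim insertE emptyE) (simp_all add: gen3_dvd_gen3)
  then have "gen3 \<omega> 2 1 0 dvd ?T"
    using dvd dvd_trans by blast
  moreover have "\<not> gen3 \<omega> 2 1 0 dvd monom a 0 + monom c D"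
    using assms(3,5,6) by (intro binomial_not_dvd) auto
  ultimately have "b \<noteq> 0"
    by auto
  note trinomial = \<open>a \<noteq> 0\<close> \<open>b \<noteq> 0\<close> \<open>c \<noteq> 0\<close>
  have "2 \<le> D"
    using \<open>4 \<le> D\<close> by simp
  from h show False
  proof (elim insertE emptyE)
    assume "h = gen3 \<omega> 3 1 0"
    then have "[:-1, 1:] ^ 3 dvd ?T"
      using dvd by (metis factors_dvd_if_gen3_dvd(1))
    then show False
      using linear_cube_not_dvd_trinomial[OF trinomial j \<open>2 \<le> D\<close>] by blast
  next
    assume "h = gen3 \<omega> 2 2 0"
    then have "[:-1, 1:] ^ 2 dvd ?T" "[:-\<omega>, 1:] ^ 2 dvd ?T"
      using dvd by (metis factors_dvd_if_gen3_dvd)+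
    then show False
      using double_roots_not_dvd_trinomial[OF nonzero nontrivial trinomial j \<open>2 \<le> D\<close>] by blast
  next
    assume "h = gen3 \<omega> 2 1 1"
    moreover have "gen3 \<omega> 1 1 1 dvd gen3 \<omega> 2 1 1"
      by (simp add: gen3_dvd_gen3)
    ultimately have "monom 1 3 - 1 dvd ?T"
      using dvd dvd_trans unfolding gen3_1_1_1 by metis
    moreover have "\<not> (3 dvd j \<and> 3 dvd D)"
      using j \<open>4 \<le> D\<close> by presburger
    ultimately show False
      using x3_minus_1_not_dvd_trinomial[OF trinomial] by blast
  qed
qed

lemma six_le_pair_weight:
  assumes "h \<in> {gen3 \<omega> 3 1 0, gen3 \<omega> 2 2 0, gen3 \<omega> 2 1 1}" "h dvd R"
    and "coeff R 0 \<noteq> 0" "degree R + 1 < 3 * p"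
  shows "6 \<le> pair_weight (3 * p) R"
proof (rule ccontr)
  assume "\<not> 6 \<le> pair_weight (3 * p) R"
  then have "pair_weight (3 * p) R \<le> 5"
    by simp
  moreover obtain r1 r2 r3 where "h = gen3 \<omega> r1 r2 r3" "r1 + r2 + r3 = 4"
    using assms(1) by auto
  then have "4 \<le> degree R"
    using degree_ge_if_gen3_dvd[of \<omega> r1 r2 r3 R] assms(2,3) by fastforce
  ultimately obtain j where j: "j = 1 \<or> j = degree R - 1"
    and R: "R = monom (coeff R 0) 0 + monom (coeff R j) j + monom (lead_coeff R) (degree R)"
    using trinomial_if_pair_weight_le_5[OF assms(3,4)] by blast
  have "lead_coeff R \<noteq> 0"
    using assms(3) by auto
  then have "\<not> h dvd monom (coeff R 0) 0 + monom (coeff R j) j + monom (lead_coeff R) (degree R)"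
    using assms(1,3,4) j \<open>4 \<le> degree R\<close> by (intro trinomial_not_dvd) auto
  with assms(2) R show False
    by metis
qed

lemma pair_weight_gen3_0_p_0: "pair_weight (3 * p) (gen3 \<omega> 0 p 0) \<le> 4"
proof -
  have "gen3 \<omega> 0 p 0 = monom 1 p - [:\<omega> ^ p:]"
    by (simp add: gen3_def linear_power_p)
  then have "i \<in> {0, p}" if "coeff (gen3 \<omega> 0 p 0) i \<noteq> 0" for i
    using that by (cases i) (auto split: if_split_asm)
  then have "pair_weight (3 * p) (gen3 \<omega> 0 p 0) \<le> 2 * card {0, p}"
    by (intro pair_weight_le_twice_card) auto
  also have "\<dots> \<le> 4"
    by (simp add: card_insert_if)
  finally show ?thesis .
qed

lemma pair_weight_gen3_2_1_0: "pair_weight (3 * p) (gen3 \<omega> 2 1 0) \<le> 5"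
  using pair_weight_le_degree[of "gen3 \<omega> 2 1 0" "3 * p"] five_le_p by (simp add: degree_gen3)

lemma pair_weight_gen3_p_p_0: "pair_weight (3 * p) (gen3 \<omega> p p 0) \<le> 6"
proof -
  have "gen3 \<omega> p p 0 = (monom 1 p - [:1:]) * (monom 1 p - [:\<omega> ^ p:])"
    by (simp add: gen3_def linear_power_p)
  then have "i \<in> {0, p, 2 * p}" if "coeff (gen3 \<omega> p p 0) i \<noteq> 0" for i
    using that coeff_monom_minus_const_mult[where i = i and k = p] by auto
  then have "pair_weight (3 * p) (gen3 \<omega> p p 0) \<le> 2 * card {0, p, 2 * p}"
    by (intro pair_weight_le_twice_card) auto
  also have "\<dots> \<le> 6"
    by (simp add: card_insert_if)
  finally show ?thesis .
qed

lemma pair_weight_gen3_2_2_2: "pair_weight (3 * p) (gen3 \<omega> 2 2 2) \<le> 6"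
proof -
  have "gen3 \<omega> 2 2 2 = gen3 \<omega> 1 1 1 ^ 2"
    unfolding gen3_def by (simp only: power_one_right power_mult_distrib)
  then have "gen3 \<omega> 2 2 2 = (monom 1 3 - [:1:]) * (monom 1 3 - [:1:])"
    unfolding gen3_1_1_1 by (simp add: power2_eq_square one_pCons)
  then have "i \<in> {0, 3, 2 * 3}" if "coeff (gen3 \<omega> 2 2 2) i \<noteq> 0" for i
    using that coeff_monom_minus_const_mult[where i = i and k = 3] by auto
  then have "pair_weight (3 * p) (gen3 \<omega> 2 2 2) \<le> 2 * card {0, 3, 2 * 3 :: nat}"
    by (intro pair_weight_le_twice_card) auto
  then show ?thesis
    by simp
qed

lemma min_pair_dist_gen3_eqI:
  assumes "r1 \<le> p" "r2 \<le> p" "r3 \<le> p" and "r1 \<le> s1" "r2 \<le> s2" "r3 \<le> s3" "s1 + s2 + s3 < 3 * p"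
    and "pair_weight (3 * p) (gen3 \<omega> s1 s2 s3) \<le> d" "d \<le> 3 * p"
    and lower: "\<And>R. gen3 \<omega> r1 r2 r3 dvd R \<Longrightarrow> coeff R 0 \<noteq> 0 \<Longrightarrow> degree R + 1 < 3 * p
      \<Longrightarrow> d \<le> pair_weight (3 * p) R"
  shows "min_pair_dist (3 * p) (cyclic_code (3 * p) (gen3 \<omega> r1 r2 r3)) = d"
proof (rule min_pair_dist_cyclic_code_eqI[where w = "gen3 \<omega> s1 s2 s3"])
  show g: "gen3 \<omega> r1 r2 r3 dvd xn_minus_1 (3 * p)"
    using assms(1-3) by (rule gen3_dvd_xn_minus_1)
  show "0 < 3 * p"
    using five_le_p by simp
  have "coeff (gen3 \<omega> s1 s2 s3) i = 0" if "3 * p \<le> i" for i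
    using that assms(7) by (intro coeff_eq_0) (simp add: degree_gen3)
  then show "gen3 \<omega> s1 s2 s3 \<in> cyclic_code (3 * p) (gen3 \<omega> r1 r2 r3)"
    using assms(4-6) cyclic_code_iff[OF g \<open>0 < 3 * p\<close>] by (simp add: gen3_dvd_gen3)
  show "gen3 \<omega> s1 s2 s3 \<noteq> 0"
    by (rule gen3_nonzero)
qed (use assms in auto)

lemma min_pair_dist_0_r2_0:
  assumes "2 \<le> r2" "r2 \<le> p - 1"
  shows "min_pair_dist (3 * p) (cyclic_code (3 * p) (gen3 \<omega> 0 r2 0)) = 4"
proof (rule min_pair_dist_gen3_eqI[of 0 r2 0 0 p 0])
  fix R assume "gen3 \<omega> 0 r2 0 dvd R" "coeff R 0 \<noteq> 0" "degree R + 1 < 3 * p"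
  then show "4 \<le> pair_weight (3 * p) R"
    using degree_ge_if_gen3_dvd[of \<omega> 0 r2 0 R] assms(1) by (intro four_le_pair_weight) fastforce+
qed (use assms five_le_p pair_weight_gen3_0_p_0 in auto)

lemma min_pair_dist_2_1_0: "min_pair_dist (3 * p) (cyclic_code (3 * p) (gen3 \<omega> 2 1 0)) = 5"
  using five_le_p pair_weight_gen3_2_1_0 five_le_pair_weight
  by (intro min_pair_dist_gen3_eqI[of 2 1 0 2 1 0]) auto

lemma min_pair_dist_r1_r2_0:
  assumes "r1 \<le> p - 1" "r2 \<le> r1" "1 \<le> r2" "4 \<le> r1 + r2"
  shows "min_pair_dist (3 * p) (cyclic_code (3 * p) (gen3 \<omega> r1 r2 0)) = 6"
proof (rule min_pair_dist_gen3_eqI[of r1 r2 0 p p 0])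
  have "gen3 \<omega> 3 1 0 dvd gen3 \<omega> r1 r2 0 \<or> gen3 \<omega> 2 2 0 dvd gen3 \<omega> r1 r2 0"
    using assms by (cases "3 \<le> r1") (auto simp: gen3_dvd_gen3)
  then obtain h where h: "h \<in> {gen3 \<omega> 3 1 0, gen3 \<omega> 2 2 0, gen3 \<omega> 2 1 1}" "h dvd gen3 \<omega> r1 r2 0"
    by blast
  show "6 \<le> pair_weight (3 * p) R"
    if "gen3 \<omega> r1 r2 0 dvd R" "coeff R 0 \<noteq> 0" "degree R + 1 < 3 * p" for R
    using six_le_pair_weight[OF h(1) dvd_trans[OF h(2) that(1)] that(2,3)] .
qed (use assms five_le_p pair_weight_gen3_p_p_0 in auto)

lemma min_pair_dist_2_r2_r3:
  assumes "r2 \<le> 2" "r3 \<le> r2" "2 \<le> r2 + r3"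
  shows "min_pair_dist (3 * p) (cyclic_code (3 * p) (gen3 \<omega> 2 r2 r3)) = 6"
proof (rule min_pair_dist_gen3_eqI[of 2 r2 r3 2 2 2])
  have "gen3 \<omega> 2 2 0 dvd gen3 \<omega> 2 r2 r3 \<or> gen3 \<omega> 2 1 1 dvd gen3 \<omega> 2 r2 r3"
    using assms by (cases "r2 = 2") (auto simp: gen3_dvd_gen3)
  then obtain h where h: "h \<in> {gen3 \<omega> 3 1 0, gen3 \<omega> 2 2 0, gen3 \<omega> 2 1 1}" "h dvd gen3 \<omega> 2 r2 r3"
    by blast
  show "6 \<le> pair_weight (3 * p) R"
    if "gen3 \<omega> 2 r2 r3 dvd R" "coeff R 0 \<noteq> 0" "degree R + 1 < 3 * p" for R
    using six_le_pair_weight[OF h(1) dvd_trans[OF h(2) that(1)] that(2,3)] .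
qed (use assms five_le_p pair_weight_gen3_2_2_2 in auto)

end

theorem proposition3p15:
  fixes \<omega> :: "'a::{field,finite}" and p :: nat
  assumes "prime p" and "odd p" and "card (UNIV :: 'a set) = p"
    and "\<omega> ^ 3 = 1" and "\<omega> \<noteq> 1"
  shows "(\<forall>r2. 2 \<le> r2 \<and> r2 \<le> p - 1 \<longrightarrow>
            min_pair_dist (3*p) (cyclic_code (3*p) (gen3 \<omega> 0 r2 0)) = 4)
       \<and> min_pair_dist (3*p) (cyclic_code (3*p) (gen3 \<omega> 2 1 0)) = 5
       \<and> (\<forall>r1 r2. r1 \<le> p - 1 \<and> r2 \<le> r1 \<and> 1 \<le> r2 \<and> 4 \<le> r1 + r2 \<longrightarrow>
            min_pair_dist (3*p) (cyclic_code (3*p) (gen3 \<omega> r1 r2 0)) = 6)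
       \<and> (\<forall>r2 r3. r2 \<le> 2 \<and> r3 \<le> r2 \<and> 2 \<le> r2 + r3 \<and> r2 + r3 \<le> 4 \<longrightarrow>
            min_pair_dist (3*p) (cyclic_code (3*p) (gen3 \<omega> 2 r2 r3)) = 6)"
proof -
  interpret cyclic_code_3p \<omega> p
    using assms by unfold_locales
  show ?thesis
    using min_pair_dist_0_r2_0 min_pair_dist_2_1_0 min_pair_dist_r1_r2_0 min_pair_dist_2_r2_r3
    by blast
qed

end
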